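(* Let $D$ be a positive integer that is not a perfect square, and let $Q_1,Q_2,Q_3$ be forms in the principal cycle of determinant $D$. Suppose $\tilde I\approx Q_1$ via $S_1=\pm L_{k_1}$ and $\tilde I\approx Q_2$ via $S_2=\pm L_{k_2}$, where $k_1,k_2\ge0$. Suppose $Q_3=Q_1\circ Q_2$ via a bilinear matrix $B$ with $\log\|B\|\le c_1\log D$ for a constant $c_1$. Let $S_3$ be defined by $S_3B=B_0(S_1\otimes S_2)$, where $B_0=\begin{pmatrix}1&0&0&D-\lambda^2\\0&1&1&2\lambda\end{pmatrix}$, $\lambda=\lfloor\sqrt D\rfloor$, and suppose $S_3=\pm L_{k_3}$. Define $\xi$ by $$\log\|L_{k_3}\|=\log\|L_{k_1}\|+\log\|L_{k_2}\|+\xi.$$ Then $|\xi|\le (c_1+4)\log D$.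
   Context: Forms $[a,2b,c]$ mean $ax_1^2+2bx_1x_2+cx_2^2$ with matrix $\begin{pmatrix} a&b\\ b&c\end{pmatrix}$, determinant $b^2-ac$. $Q\approx Q'$ via $S$: $S$ integer $2\times2$, $\det S=1$, $S^tQS=Q'$. Reduced form of determinant $D$: $0<b<\sqrt D$, $\sqrt D-b<|a|<\sqrt D+b$. $\tilde I=[1,2\lambda,\lambda^2-D]$. The right neighbor of a reduced $Q_1=[a_1,2b_1,c_1]$ is $S^tQ_1S$ with $S=\begin{pmatrix}0&1\\-1&\mu\end{pmatrix}$, $\mu$ the integer with $-\sqrt D-b_1<\mu c_1<-\sqrt D-b_1+|c_1|$. Principal cycle: $Q^{(0)}=\tilde I$, $Q^{(j)}$ the right neighbor of $Q^{(j-1)}$, $S^{(j)}$ the corresponding matrix; $L_0=$ identity, $L_j=S^{(1)}\cdots S^{(j)}$ for $j\ge1$; the cycle has least period $2p$; for negative $j$, $S^{(j)}=(S^{(j_0)})^{-1}$ with $j\equiv j_0\pmod{2p}$, $0<j_0\le2p$, and $L_{-j}=S^{(-j)}\cdots S^{(-1)}$. Composition $Q_3=Q_1\circ Q_2$ via a $2\times4$ integer matrix $B$: $(x^tQ_1x)(y^tQ_2y)=z^tB^tQ_3Bz$ identically with $z=(x_1y_1,x_1y_2,x_2y_1,x_2y_2)^t$, where $B$ is unimodular (its six $2\times2$ minors $\Delta_{ik}$ from columns $i<k$ have gcd 1) and oriented ($a_1\Delta_{12}>0$, $a_2\Delta_{13}>0$, $a_i$ the leading coefficient of $Q_i$). $\otimes$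 is the Kronecker product. $\|M\|$ is the maximum absolute value of the entries of $M$. Logarithms: $\log x=\log_2|x|$ if $|x|\ge4$, and $\log x=2$ if $|x|<4$. *)

theory Defs
  imports Complex_Main "Jordan_Normal_Form.Determinant"
begin

(* A binary quadratic form [a,2b,c] is represented by its symmetric 2x2 integer
   matrix  (a b; b c). *)

definition mat2 :: "int \<Rightarrow> int \<Rightarrow> int \<Rightarrow> int \<Rightarrow> int mat" where
  "mat2 a b c d = mat_of_rows_list 2 [[a, b], [c, d]]"

definition isqrt :: "int \<Rightarrow> int" where
  "isqrt D = \<lfloor>sqrt (real_of_int D)\<rfloor>"

definition Itilde :: "int \<Rightarrow> int mat" where
  "Itilde D = mat2 1 (isqrt D) (isqrt D) (isqrt D ^ 2 - D)"

definition nb_mu :: "int \<Rightarrow> int mat \<Rightarrow> int" where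
  "nb_mu D Q = (THE \<mu>::int.
      - sqrt (real_of_int D) - real_of_int (Q $$ (0,1)) < real_of_int (\<mu> * Q $$ (1,1)) \<and>
      real_of_int (\<mu> * Q $$ (1,1)) < - sqrt (real_of_int D) - real_of_int (Q $$ (0,1)) + real_of_int \<bar>Q $$ (1,1)\<bar>)"

definition nb_S :: "int \<Rightarrow> int mat \<Rightarrow> int mat" where
  "nb_S D Q = mat2 0 1 (-1) (nb_mu D Q)"

definition right_neighbor :: "int \<Rightarrow> int mat \<Rightarrow> int mat" where
  "right_neighbor D Q = transpose_mat (nb_S D Q) * Q * nb_S D Q"

definition Qcyc :: "int \<Rightarrow> nat \<Rightarrow> int mat" where
  "Qcyc D j = (right_neighbor D ^^ j) (Itilde D)"

definition principal_cycle :: "int \<Rightarrow> int mat set" where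
  "principal_cycle D = range (Qcyc D)"

(* S^(j) for j >= 1 *)
definition Scyc :: "int \<Rightarrow> nat \<Rightarrow> int mat" where
  "Scyc D j = nb_S D (Qcyc D (j - 1))"

definition cyc_period :: "int \<Rightarrow> nat" where
  "cyc_period D = (LEAST n. n > 0 \<and> Qcyc D n = Qcyc D 0)"

definition inv2 :: "int mat \<Rightarrow> int mat" where
  "inv2 M = mat2 (M $$ (1,1)) (- M $$ (0,1)) (- M $$ (1,0)) (M $$ (0,0))"

(* S^(-m) for m >= 1: inverse of S^(j0), j0 == -m mod 2p, 0 < j0 <= 2p *)
definition Sneg :: "int \<Rightarrow> nat \<Rightarrow> int mat" where
  "Sneg D m = (let P = int (cyc_period D); r = (- int m) mod P
               in inv2 (Scyc D (nat (if r = 0 then P else r))))"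

fun Lpos :: "int \<Rightarrow> nat \<Rightarrow> int mat" where
  "Lpos D 0 = 1\<^sub>m 2"
| "Lpos D (Suc j) = Lpos D j * Scyc D (Suc j)"

fun Lneg :: "int \<Rightarrow> nat \<Rightarrow> int mat" where
  "Lneg D 0 = 1\<^sub>m 2"
| "Lneg D (Suc j) = Sneg D (Suc j) * Lneg D j"

definition Lcyc :: "int \<Rightarrow> int \<Rightarrow> int mat" where
  "Lcyc D k = (if k \<ge> 0 then Lpos D (nat k) else Lneg D (nat (- k)))"

definition equiv_via :: "int mat \<Rightarrow> int mat \<Rightarrow> int mat \<Rightarrow> bool" where
  "equiv_via Q Q' S \<longleftrightarrow> S \<in> carrier_mat 2 2 \<and> det S = 1 \<and> transpose_mat S * Q * S = Q'"

definition minor24 :: "int mat \<Rightarrow> nat \<Rightarrow> nat \<Rightarrow> int" where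
  "minor24 B i k = B $$ (0,i) * B $$ (1,k) - B $$ (0,k) * B $$ (1,i)"

definition qval :: "int mat \<Rightarrow> int vec \<Rightarrow> int" where
  "qval Q x = x \<bullet> (Q *\<^sub>v x)"

definition composes_via :: "int mat \<Rightarrow> int mat \<Rightarrow> int mat \<Rightarrow> int mat \<Rightarrow> bool" where
  "composes_via Q1 Q2 Q3 B \<longleftrightarrow>
     B \<in> carrier_mat 2 4 \<and>
     (\<forall>x1 x2 y1 y2 :: int.
        qval Q1 (vec_of_list [x1, x2]) * qval Q2 (vec_of_list [y1, y2])
        = (let z = vec_of_list [x1*y1, x1*y2, x2*y1, x2*y2] in z \<bullet> (transpose_mat B * Q3 * B *\<^sub>v z))) \<and>
     Gcd ((\<lambda>(i,k). minor24 B i k) ` {(i,k). i < k \<and> k < 4}) = 1 \<and>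
     Q1 $$ (0,0) * minor24 B 0 1 > 0 \<and> Q2 $$ (0,0) * minor24 B 0 2 > 0"

definition kron :: "int mat \<Rightarrow> int mat \<Rightarrow> int mat" where
  "kron A B = mat (dim_row A * dim_row B) (dim_col A * dim_col B)
     (\<lambda>(i,j). A $$ (i div dim_row B, j div dim_col B) * B $$ (i mod dim_row B, j mod dim_col B))"

definition B0 :: "int \<Rightarrow> int mat" where
  "B0 D = mat_of_rows_list 4 [[1, 0, 0, D - isqrt D ^ 2], [0, 1, 1, 2 * isqrt D]]"

definition mnorm :: "int mat \<Rightarrow> int" where
  "mnorm M = Max {\<bar>M $$ (i,j)\<bar> | i j. i < dim_row M \<and> j < dim_col M}"

definition lg :: "real \<Rightarrow> real" where
  "lg x = (if \<bar>x\<bar> \<ge> 4 then log 2 \<bar>x\<bar> else 2)"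

end

(*
  Let omega = isqrt D + sqrt D and let phi, psi send x1 + x2 omega to its two real conjugates,
  so that Itilde(x) = phi(x) psi(x).  Along the principal cycle the second column v of L_k
  satisfies |psi v| < 1 and sqrt D < |phi v|, and every entry of L_k is at most
  1 + |phi v| / (2 sqrt D).  Entry (1,3) of S3 B = B0 (S1 (x) S2) equals
  (phi v1 phi v2 - psi v1 psi v2) / (2 sqrt D), whence ||S1|| ||S2|| <= 16 ||S3|| ||B||.
  Conversely, solving S3 B = B0 (S1 (x) S2) for S3 by Cramer's rule on two columns of B with
  nonzero minor (orientation makes the first minor nonzero) gives
  ||S3|| <= 4 (isqrt D + 1) ||S1|| ||S2|| ||B||.
*)

theory Submission
  imports Defs
begin

subsection \<open>Matrices and their norm\<close>

lemma mat2_carrier [simp]: "mat2 a b c d \<in> carrier_mat 2 2"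
  unfolding mat2_def mat_of_rows_list_def by (simp add: numeral_2_eq_2)

lemma dim_mat2 [simp]: "dim_row (mat2 a b c d) = 2" "dim_col (mat2 a b c d) = 2"
  by (simp_all add: mat2_def mat_of_rows_list_def)

lemma index_mat2 [simp]:
  "mat2 a b c d $$ (0,0) = a" "mat2 a b c d $$ (0,1) = b"
  "mat2 a b c d $$ (1,0) = c" "mat2 a b c d $$ (1,1) = d"
  by (simp_all add: mat2_def mat_of_rows_list_def)

lemma mat2_mult:
  "mat2 a b c d * mat2 e f g h = mat2 (a*e + b*g) (a*f + b*h) (c*e + d*g) (c*f + d*h)"
  by (rule eq_matI)
    (auto simp: mat2_def mat_of_rows_list_def scalar_prod_def less_Suc_eq numeral_2_eq_2)

lemma transpose_mat2: "transpose_mat (mat2 a b c d) = mat2 a c b d"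
  by (rule eq_matI) (auto simp: mat2_def mat_of_rows_list_def less_Suc_eq numeral_2_eq_2)

lemma one_mat2: "(1\<^sub>m 2 :: int mat) = mat2 1 0 0 1"
  by (rule eq_matI) (auto simp: mat2_def mat_of_rows_list_def less_Suc_eq numeral_2_eq_2)

lemma mult_2col_index:
  assumes "S \<in> carrier_mat n 2" "B \<in> carrier_mat 2 m" "r < n" "j < m"
  shows "(S * B) $$ (r,j) = S $$ (r,0) * B $$ (0,j) + S $$ (r,1) * B $$ (1,j)"
  using assms by (auto simp: scalar_prod_def numeral_2_eq_2)

lemma kron_carrier:
  "A \<in> carrier_mat m n \<Longrightarrow> C \<in> carrier_mat p q \<Longrightarrow> kron A C \<in> carrier_mat (m * p) (n * q)"
  by (simp add: kron_def)

lemma index_kron: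
  assumes "A \<in> carrier_mat m n" "C \<in> carrier_mat p q" "i < m * p" "j < n * q"
  shows "kron A C $$ (i,j) = A $$ (i div p, j div q) * C $$ (i mod p, j mod q)"
  using assms by (simp add: kron_def)

lemma index_B0_mult:
  assumes "K \<in> carrier_mat 4 4" "j < 4"
  shows "(B0 D * K) $$ (0,j) = K $$ (0,j) + (D - isqrt D ^ 2) * K $$ (3,j)"
    and "(B0 D * K) $$ (1,j) = K $$ (1,j) + K $$ (2,j) + 2 * isqrt D * K $$ (3,j)"
  using assms by (auto simp: B0_def mat_of_rows_list_def scalar_prod_def eval_nat_numeral)

lemma mnorm_eq_Max_image:
  "mnorm M = Max ((\<lambda>(i,j). \<bar>M $$ (i,j)\<bar>) ` ({..<dim_row M} \<times> {..<dim_col M}))"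
  unfolding mnorm_def by (rule arg_cong[where f = Max]) auto

lemma abs_index_le_mnorm: "i < dim_row M \<Longrightarrow> j < dim_col M \<Longrightarrow> \<bar>M $$ (i,j)\<bar> \<le> mnorm M"
  unfolding mnorm_eq_Max_image by (rule Max_ge) auto

lemma mnorm_nonneg: "i < dim_row M \<Longrightarrow> j < dim_col M \<Longrightarrow> 0 \<le> mnorm M"
  using abs_index_le_mnorm abs_ge_zero order_trans by blast

lemma mnorm_leI:
  assumes "0 < dim_row M" "0 < dim_col M"
    and "\<And>i j. i < dim_row M \<Longrightarrow> j < dim_col M \<Longrightarrow> \<bar>M $$ (i,j)\<bar> \<le> c"
  shows "mnorm M \<le> c"
  unfolding mnorm_eq_Max_image using assms by (subst Max_le_iff) auto

lemma mnorm_uminus [simp]: "mnorm (- M) = mnorm M"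
  unfolding mnorm_eq_Max_image by (intro arg_cong[where f = Max] image_cong) auto

lemma mnorm_mat2_le:
  assumes "\<bar>a\<bar> \<le> x" "\<bar>b\<bar> \<le> x" "\<bar>c\<bar> \<le> x" "\<bar>d\<bar> \<le> x"
  shows "mnorm (mat2 a b c d) \<le> x"
proof (rule mnorm_leI)
  fix i j assume "i < dim_row (mat2 a b c d)" "j < dim_col (mat2 a b c d)"
  then show "\<bar>mat2 a b c d $$ (i, j)\<bar> \<le> x"
    using assms by (auto simp: mat2_def mat_of_rows_list_def less_Suc_eq numeral_2_eq_2)
qed auto

lemma abs_index_mult_le:
  assumes "i < dim_row A" "j < dim_col B" "dim_col A = dim_row B"
  shows "\<bar>(A * B) $$ (i,j)\<bar> \<le> of_nat (dim_col A) * (mnorm A * mnorm B)"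
proof -
  have "(A * B) $$ (i,j) = (\<Sum>k<dim_col A. A $$ (i,k) * B $$ (k,j))"
    using assms by (simp add: scalar_prod_def atLeast0LessThan)
  then have "\<bar>(A * B) $$ (i,j)\<bar> \<le> (\<Sum>k<dim_col A. \<bar>A $$ (i,k) * B $$ (k,j)\<bar>)"
    by (simp only: sum_abs)
  also have "\<dots> \<le> (\<Sum>k<dim_col A. mnorm A * mnorm B)"
    unfolding abs_mult using assms
    by (intro sum_mono mult_mono abs_index_le_mnorm mnorm_nonneg) auto
  finally show ?thesis by simp
qed

lemma abs_index_kron_le:
  assumes A: "A \<in> carrier_mat m n" and C: "C \<in> carrier_mat p q" and "i < m * p" "j < n * q"
  shows "\<bar>kron A C $$ (i,j)\<bar> \<le> mnorm A * mnorm C"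
proof -
  have "0 < p" "0 < q" using assms(3,4) by (auto intro!: gr0I)
  then have "i div p < m" "j div q < n" "i mod p < p" "j mod q < q"
    using assms by (auto simp: less_mult_imp_div_less)
  then show ?thesis
    unfolding index_kron[OF assms] abs_mult using A C
    by (intro mult_mono' abs_index_le_mnorm) auto
qed

lemma mnorm_le_of_nonzero_minor:
  assumes S: "S \<in> carrier_mat 2 2" and B: "B \<in> carrier_mat 2 4"
    and ik: "i < 4" "k < 4" and minor: "minor24 B i k \<noteq> 0"
    and bound: "\<And>r j. r < 2 \<Longrightarrow> j < 4 \<Longrightarrow> \<bar>(S * B) $$ (r,j)\<bar> \<le> m"
  shows "mnorm S \<le> 2 * m * mnorm B"
proof (rule mnorm_leI)
  fix r c assume "r < dim_row S" "c < dim_col S"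
  then have r: "r < 2" and c: "c = 0 \<or> c = 1" using S by auto
  let ?M = "S * B"
  have col: "?M $$ (r,j) = S $$ (r,0) * B $$ (0,j) + S $$ (r,1) * B $$ (1,j)" if "j < 4" for j
    using mult_2col_index[OF S B r that] .
  define u where "u = (if c = 0 then ?M $$ (r,i) * B $$ (1,k) else ?M $$ (r,k) * B $$ (0,i))"
  define v where "v = (if c = 0 then ?M $$ (r,k) * B $$ (1,i) else ?M $$ (r,i) * B $$ (0,k))"
  \<comment> \<open>Cramer's rule for the columns \<open>i, k\<close> of \<open>S B\<close>\<close>
  have "minor24 B i k * S $$ (r,c) = u - v"
    using c unfolding u_def v_def col[OF ik(1)] col[OF ik(2)] minor24_def
    by (elim disjE) (simp_all add: algebra_simps)
  moreover have "\<bar>?M $$ (r,j) * B $$ (l,j')\<bar> \<le> m * mnorm B" if "j < 4" "l < 2" "j' < 4" for j l j'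
    unfolding abs_mult using bound[OF r that(1)] abs_index_le_mnorm[of l B j'] B that
    by (intro mult_mono) auto
  then have "\<bar>u\<bar> \<le> m * mnorm B" "\<bar>v\<bar> \<le> m * mnorm B" unfolding u_def v_def using ik by auto
  ultimately have "\<bar>minor24 B i k * S $$ (r,c)\<bar> \<le> 2 * m * mnorm B"
    using abs_triangle_ineq4[of u v] by linarith
  moreover have "1 \<le> \<bar>minor24 B i k\<bar>" using minor by (simp add: int_one_le_iff_zero_less)
  then have "\<bar>S $$ (r,c)\<bar> \<le> \<bar>minor24 B i k * S $$ (r,c)\<bar>"
    unfolding abs_mult using mult_right_mono[of 1 "\<bar>minor24 B i k\<bar>" "\<bar>S $$ (r,c)\<bar>"] by simp
  ultimately show "\<bar>S $$ (r,c)\<bar> \<le> 2 * m * mnorm B" by linarith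
qed (use S in auto)

subsection \<open>The truncated logarithm\<close>

lemma two_le_log2_iff: "0 < x \<Longrightarrow> 2 \<le> log 2 x \<longleftrightarrow> 4 \<le> x"
  by (simp add: le_log_iff)

lemma lg_eq_max: "1 \<le> x \<Longrightarrow> lg x = max 2 (log 2 x)"
  using two_le_log2_iff[of x] by (simp add: lg_def max_def)

lemma lg_ge_2: "2 \<le> lg x"
  using two_le_log2_iff[of "\<bar>x\<bar>"] by (simp add: lg_def)

lemma lg_mono: "1 \<le> x \<Longrightarrow> x \<le> y \<Longrightarrow> lg x \<le> lg y"
  by (simp add: lg_eq_max max.coboundedI2)

lemma one_le_mult_real: "1 \<le> x \<Longrightarrow> 1 \<le> y \<Longrightarrow> 1 \<le> x * (y::real)"
  using mult_mono[of 1 x 1 y] by simp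

lemma lg_mult_le:
  assumes "1 \<le> x" "1 \<le> y"
  shows "lg (x * y) \<le> lg x + lg y"
proof -
  have "max 2 (u + v) \<le> max 2 u + max 2 v" if "0 \<le> u" "0 \<le> v" for u v :: real
    using that by (simp add: max_def)
  then show ?thesis
    using assms one_le_mult_real[OF assms] by (simp add: lg_eq_max log_mult)
qed

lemma lg_mult_le_log:
  assumes "1 \<le> c" "1 \<le> x"
  shows "lg (c * x) \<le> log 2 c + lg x"
proof -
  have "max 2 (u + v) \<le> u + max 2 v" if "0 \<le> u" for u v :: real
    using that by (simp add: max_def)
  then show ?thesis
    using assms one_le_mult_real[OF assms] by (simp add: lg_eq_max log_mult)
qed

lemma lg_add_le:
  assumes "1 \<le> x" "1 \<le> y"
  shows "lg x + lg y \<le> lg (x * y) + 2"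
proof -
  have "max 2 u + max 2 v \<le> max 2 (u + v) + 2" if "0 \<le> u" "0 \<le> v" for u v :: real
    using that by (simp add: max_def)
  then show ?thesis
    using assms one_le_mult_real[OF assms] by (simp add: lg_eq_max log_mult)
qed

lemma log2_8: "log 2 8 = (3::real)"
  using log_pow_cancel[of "2::real" 3] by simp

lemma log2_16: "log 2 16 = (4::real)"
  using log_pow_cancel[of "2::real" 4] by simp

lemma lg_distortion_bound:
  fixes m1 m2 m3 mB l d :: int and c1 :: real
  assumes m1: "1 \<le> m1" and m2: "1 \<le> m2" and "0 \<le> m3" "0 \<le> mB" "1 \<le> l" "l \<le> d"
    and lower: "m1 * m2 \<le> 16 * (m3 * mB)"
    and upper: "m3 \<le> 4 * (l + 1) * (m1 * m2 * mB)"
    and lgB: "lg mB \<le> c1 * lg d"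
  shows "\<bar>lg m3 - lg m1 - lg m2\<bar> \<le> (c1 + 4) * lg d"
proof -
  have "0 < m3 * mB" using lower m1 m2 mult_mono[of 1 m1 1 m2] by simp
  then have m3: "1 \<le> m3" and mB: "1 \<le> mB"
    using \<open>0 \<le> m3\<close> \<open>0 \<le> mB\<close> by (auto simp: zero_less_mult_iff)
  have m12: "1 \<le> real_of_int m1 * m2" and m3B: "1 \<le> real_of_int m3 * mB"
    using m1 m2 m3 mB by (simp_all add: one_le_mult_real)
  have d: "1 \<le> real_of_int d" and m12B: "1 \<le> real_of_int m1 * m2 * mB"
    using \<open>1 \<le> l\<close> \<open>l \<le> d\<close> m12 mB by (simp_all add: one_le_mult_real)
  have "real_of_int m3 \<le> real_of_int (4 * (l + 1) * (m1 * m2 * mB))"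
    using upper by (simp only: of_int_le_iff)
  also have "\<dots> = 4 * (l + 1) * (real_of_int m1 * m2 * mB)" by simp
  also have "\<dots> \<le> 8 * d * (real_of_int m1 * m2 * mB)"
    using \<open>1 \<le> l\<close> \<open>l \<le> d\<close> m12B by (intro mult_right_mono) simp_all
  also have "\<dots> = 8 * (d * (real_of_int m1 * m2 * mB))" by (simp only: mult.assoc)
  finally have "lg m3 \<le> lg (8 * (d * (real_of_int m1 * m2 * mB)))" using m3 by (intro lg_mono) auto
  also have "\<dots> \<le> 3 + lg (d * (real_of_int m1 * m2 * mB))"
    using lg_mult_le_log[of 8] d m12B log2_8 by (simp add: one_le_mult_real)
  also have "\<dots> \<le> 3 + lg d + lg (real_of_int m1 * m2) + lg mB"
    using lg_mult_le[OF d m12B] lg_mult_le[OF m12, of mB] mB by simp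
  also have "\<dots> \<le> 3 + lg d + lg m1 + lg m2 + lg mB"
    using lg_mult_le[of m1 m2] m1 m2 by simp
  finally have up: "lg m3 - lg m1 - lg m2 \<le> 3 + lg d + lg mB" by simp
  have "lg m1 + lg m2 \<le> lg (real_of_int m1 * m2) + 2" using m1 m2 by (intro lg_add_le) auto
  also have "lg (real_of_int m1 * m2) \<le> lg (16 * (real_of_int m3 * mB))"
    using m12 of_int_le_iff[where 'a = real, THEN iffD2, OF lower] by (intro lg_mono) simp_all
  also have "\<dots> \<le> 4 + lg m3 + lg mB"
    using lg_mult_le_log[of 16, OF _ m3B] lg_mult_le[of m3 mB] m3 mB log2_16 by simp
  finally have low: "lg m1 + lg m2 - lg m3 \<le> 6 + lg mB" by simp
  have "2 \<le> lg d" by (rule lg_ge_2)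
  with up low lgB show ?thesis by (simp add: abs_le_iff algebra_simps)
qed

lemma ex_multiple_in_interval:
  fixes u :: real and c :: int
  assumes "c \<noteq> 0" and "\<And>m. u \<noteq> real_of_int (m * c)"
  shows "\<exists>\<mu>. u < real_of_int (\<mu> * c) \<and> real_of_int (\<mu> * c) < u + \<bar>c\<bar>"
proof -
  define n where "n = \<lfloor>u / \<bar>c\<bar>\<rfloor> + 1"
  have c: "0 < real_of_int \<bar>c\<bar>" using assms(1) by simp
  have mult: "real_of_int (k * \<bar>c\<bar>) = real_of_int ((k * sgn c) * c)" for k
    by (simp add: abs_sgn mult.commute mult.left_commute)
  have "u / \<bar>c\<bar> \<noteq> real_of_int (n - 1)"
    using assms(2)[of "(n - 1) * sgn c"] c mult[of "n - 1"] by (auto simp: field_simps)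
  then have "u / \<bar>c\<bar> < n" "n < u / \<bar>c\<bar> + 1" unfolding n_def by linarith+
  then have "u < real_of_int (n * \<bar>c\<bar>)" "real_of_int (n * \<bar>c\<bar>) < u + \<bar>c\<bar>"
    using c by (simp_all add: field_simps)
  then show ?thesis unfolding mult by blast
qed

lemma eq_if_dvd_diff_in_interval:
  fixes x y c :: int and u :: real
  assumes "c dvd x - y" and "u < x" "x < u + \<bar>c\<bar>" and "u < y" "y < u + \<bar>c\<bar>"
  shows "x = y"
proof (rule ccontr)
  assume "x \<noteq> y"
  then have "\<bar>c\<bar> \<le> \<bar>x - y\<bar>" using assms(1) by (simp add: dvd_imp_le_int)
  then have "real_of_int \<bar>c\<bar> \<le> \<bar>real_of_int x - real_of_int y\<bar>"
    by (metis of_int_abs of_int_diff of_int_le_iff)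
  with assms(2-5) show False by linarith
qed

lemma mult_le_of_embedding_bounds:
  fixes s P1 P2 m1 m2 z :: real
  assumes s: "7/5 \<le> s" and P: "s < P1" "s < P2"
    and m: "0 \<le> m1" "m1 \<le> 1 + P1 / (2 * s)" "0 \<le> m2" "m2 \<le> 1 + P2 / (2 * s)"
    and z: "P1 * P2 - 1 \<le> 4 * s * z"
  shows "m1 * m2 \<le> 16 * z"
proof -
  have sp: "0 < s" using s by simp
  have "m1 * m2 \<le> (3 * P1 / (2 * s)) * (3 * P2 / (2 * s))"
    using m P sp by (intro mult_mono) (auto simp: field_simps)
  also have "\<dots> = 9 * (P1 * P2) / (4 * (s * s))" by (simp add: field_simps)
  also have "\<dots> \<le> 16 * s * (P1 * P2 - 1) / (4 * (s * s))"
  proof (rule divide_right_mono)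
    have "s * s \<le> P1 * P2" using P sp by (intro mult_mono) auto
    then have "(s * s) * (16 * s - 9) \<le> P1 * P2 * (16 * s - 9)" using s by (intro mult_right_mono) auto
    moreover have "16 \<le> s * (16 * s - 9)"
      using mult_mono[of "7/5" s "7/5 * 16 - 9" "16 * s - 9"] s by auto
    then have "s * 16 \<le> s * (s * (16 * s - 9))" using sp by (intro mult_left_mono) auto
    ultimately show "9 * (P1 * P2) \<le> 16 * s * (P1 * P2 - 1)" by (simp add: algebra_simps)
  qed simp
  also have "\<dots> = 4 * (P1 * P2 - 1) / s" using sp by (simp add: field_simps)
  also have "\<dots> \<le> 16 * z" using z sp by (simp add: field_simps)
  finally show ?thesis .
qed

subsection \<open>Quadratic irrationalities\<close>

locale nonsquare =
  fixes D :: int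
  assumes D_pos: "0 < D" and D_nonsquare: "\<not> (\<exists>r::int. r ^ 2 = D)"
begin

abbreviation sqrtD :: real where "sqrtD \<equiv> sqrt (real_of_int D)"

lemma sqrtD_mult_self: "sqrtD * sqrtD = real_of_int D"
  using D_pos by simp

lemma sqrtD_not_int: "sqrtD \<noteq> real_of_int m"
proof
  assume "sqrtD = real_of_int m"
  then have "real_of_int (m ^ 2) = real_of_int D" using sqrtD_mult_self by (simp add: power2_eq_square)
  with D_nonsquare show False by (metis of_int_eq_iff)
qed

lemma isqrt_less_sqrtD: "real_of_int (isqrt D) < sqrtD"
  using sqrtD_not_int[of "isqrt D"] unfolding isqrt_def by linarith

lemma sqrtD_less_isqrt_plus_1: "sqrtD < real_of_int (isqrt D) + 1"
  unfolding isqrt_def by linarith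

lemma D_ge_2: "2 \<le> D"
proof -
  have "D \<noteq> 1" using D_nonsquare by (metis one_power2)
  with D_pos show ?thesis by linarith
qed

lemma isqrt_pos: "1 \<le> isqrt D"
proof -
  have "1 \<le> sqrtD" using D_pos by simp
  then show ?thesis unfolding isqrt_def by linarith
qed

lemma isqrt_sq_bounds: "isqrt D ^ 2 \<le> D" "D - isqrt D ^ 2 \<le> 2 * isqrt D"
proof -
  have "real_of_int (isqrt D) ^ 2 \<le> sqrtD ^ 2"
    using isqrt_less_sqrtD isqrt_pos by (intro power_mono) auto
  then show "isqrt D ^ 2 \<le> D" using D_pos by (simp flip: of_int_le_iff)
  have "sqrtD ^ 2 < (real_of_int (isqrt D) + 1) ^ 2"
    using sqrtD_less_isqrt_plus_1 D_pos by (intro power_strict_mono) auto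
  then have "real_of_int D < real_of_int ((isqrt D + 1) ^ 2)" using D_pos by simp
  then have "D < (isqrt D + 1) ^ 2" by (simp only: of_int_less_iff)
  then show "D - isqrt D ^ 2 \<le> 2 * isqrt D" by (simp add: power2_eq_square algebra_simps)
qed

lemma isqrt_le_D: "isqrt D \<le> D"
proof -
  have "isqrt D * 1 \<le> isqrt D * isqrt D" using isqrt_pos by (intro mult_left_mono) auto
  with isqrt_sq_bounds(1) show ?thesis by (simp add: power2_eq_square)
qed

lemma sqrtD_ge: "7/5 \<le> sqrtD"
proof -
  have "(2::real) \<le> real_of_int D" using D_ge_2 by simp
  then have "(7/5) ^ 2 \<le> sqrtD ^ 2" by (simp add: power2_eq_square)
  then show ?thesis by (rule power2_le_imp_le) (use D_pos in simp)
qed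

definition phi :: "int \<Rightarrow> int \<Rightarrow> real" where
  "phi x1 x2 = x1 + x2 * (isqrt D + sqrtD)"

definition psi :: "int \<Rightarrow> int \<Rightarrow> real" where
  "psi x1 x2 = x1 + x2 * (isqrt D - sqrtD)"

lemma phi_uminus: "phi (- x1) (- x2) = - phi x1 x2"
  and psi_uminus: "psi (- x1) (- x2) = - psi x1 x2"
  by (simp_all add: phi_def psi_def algebra_simps)

lemma phi_add_mult: "phi (p + q * m) (r + t * m) = phi p r + m * phi q t"
  and psi_add_mult: "psi (p + q * m) (r + t * m) = psi p r + m * psi q t"
  by (simp_all add: phi_def psi_def algebra_simps)

definition reduced :: "int \<Rightarrow> int \<Rightarrow> bool" where
  "reduced a b \<longleftrightarrow> 0 < b \<and> b < sqrtD \<and> sqrtD - b < \<bar>a\<bar> \<and> \<bar>a\<bar> < sqrtD + b"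

lemma reduced_abs_last_coeff:
  fixes a b c :: int
  assumes red: "reduced a b" and ac: "a * c = b ^ 2 - D"
  shows "sqrtD - b < \<bar>c\<bar>" and "\<bar>c\<bar> < sqrtD + b"
proof -
  have b: "0 < b" "b < sqrtD" and a: "sqrtD - b < \<bar>a\<bar>" "\<bar>a\<bar> < sqrtD + b"
    using red by (auto simp: reduced_def)
  have "real_of_int b * b < sqrtD * sqrtD" using b D_pos by (intro mult_strict_mono) auto
  then have "b * b < D" by (simp only: sqrtD_mult_self of_int_mult[symmetric] of_int_less_iff)
  then have "\<bar>a\<bar> * \<bar>c\<bar> = D - b * b" using ac by (simp add: abs_mult[symmetric] power2_eq_square)
  then have "real_of_int \<bar>a\<bar> * \<bar>c\<bar> = sqrtD * sqrtD - b * b"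
    by (metis of_int_diff of_int_mult sqrtD_mult_self)
  then have prod: "real_of_int \<bar>a\<bar> * \<bar>c\<bar> = (sqrtD - b) * (sqrtD + b)"
    by (simp add: algebra_simps)
  show "sqrtD - b < \<bar>c\<bar>"
  proof (rule ccontr)
    assume "\<not> sqrtD - b < \<bar>c\<bar>"
    then have "real_of_int \<bar>a\<bar> * \<bar>c\<bar> \<le> \<bar>a\<bar> * (sqrtD - b)" by (intro mult_left_mono) auto
    also have "\<dots> < (sqrtD + b) * (sqrtD - b)" using a b by (intro mult_strict_right_mono) auto
    finally show False using prod by (simp add: mult.commute)
  qed
  show "\<bar>c\<bar> < sqrtD + b"
  proof (rule ccontr)
    assume "\<not> \<bar>c\<bar> < sqrtD + b"
    have "(sqrtD - b) * (sqrtD + b) < \<bar>a\<bar> * (sqrtD + b)" using a b by (intro mult_strict_right_mono) auto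
    also have "\<dots> \<le> real_of_int \<bar>a\<bar> * \<bar>c\<bar>"
      using \<open>\<not> \<bar>c\<bar> < sqrtD + b\<close> by (intro mult_left_mono) auto
    finally show False using prod by simp
  qed
qed

lemma reduced_right_neighbor:
  fixes a b c \<mu> :: int
  assumes red: "reduced a b" and ac: "a * c = b ^ 2 - D"
    and mu: "- sqrtD - b < \<mu> * c" "\<mu> * c < - sqrtD - b + \<bar>c\<bar>"
  shows "reduced c (- b - \<mu> * c)"
proof -
  have b: "0 < b" "b < sqrtD" using red by (auto simp: reduced_def)
  note c = reduced_abs_last_coeff[OF red ac]
  have b'_bounds: "sqrtD - \<bar>c\<bar> < - b - \<mu> * c" "- b - \<mu> * c < sqrtD" using mu by simp_all
  have "0 < - b - \<mu> * c \<and> \<bar>c\<bar> < sqrtD + (- b - \<mu> * c)"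
  proof (cases "\<bar>c\<bar> \<le> sqrtD")
    case True
    then have pos: "0 < real_of_int (- b - \<mu> * c)" using b'_bounds by linarith
    then have "0 < - b - \<mu> * c" by (simp only: of_int_0_less_iff)
    moreover have "\<bar>c\<bar> < sqrtD + (- b - \<mu> * c)" using pos True by linarith
    ultimately show ?thesis ..
  next
    case False
    \<comment> \<open>Both sides are \<open>\<equiv> -b (mod c)\<close> and lie in an open interval of length \<open>\<bar>c\<bar>\<close>.\<close>
    have eq: "- b - \<mu> * c = \<bar>c\<bar> - b"
    proof (rule eq_if_dvd_diff_in_interval[where c = c and u = "sqrtD - \<bar>c\<bar>"])
      show "c dvd (- b - \<mu> * c) - (\<bar>c\<bar> - b)" by simp
    qed (use b'_bounds False b c in simp_all)
    have "real_of_int b < real_of_int \<bar>c\<bar>" using False b by simp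
    then have "b < \<bar>c\<bar>" by (simp only: of_int_less_iff)
    then show ?thesis unfolding eq using b by simp
  qed
  with b'_bounds show ?thesis unfolding reduced_def by auto
qed

lemma nb_mu_bounds:
  fixes a b c :: int
  assumes "c \<noteq> 0"
  shows "- sqrtD - b < nb_mu D (mat2 a b b c) * c"
    and "nb_mu D (mat2 a b b c) * c < - sqrtD - b + \<bar>c\<bar>"
proof -
  let ?P = "\<lambda>\<mu>::int. - sqrtD - b < \<mu> * c \<and> \<mu> * c < - sqrtD - b + \<bar>c\<bar>"
  have "\<exists>\<mu>. ?P \<mu>"
  proof (rule ex_multiple_in_interval[OF assms])
    show "- sqrtD - b \<noteq> real_of_int (m * c)" for m
      using sqrtD_not_int[of "- b - m * c"] by auto
  qed
  moreover have "\<mu>1 = \<mu>2" if "?P \<mu>1" "?P \<mu>2" for \<mu>1 \<mu>2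
  proof -
    have "\<mu>1 * c = \<mu>2 * c"
      by (rule eq_if_dvd_diff_in_interval[where c = c and u = "- sqrtD - b"])
        (use that in \<open>simp_all add: left_diff_distrib[symmetric]\<close>)
    with assms show ?thesis by simp
  qed
  ultimately have "\<exists>!\<mu>. ?P \<mu>" by blast
  then have "?P (THE \<mu>. ?P \<mu>)" by (rule theI')
  moreover have "nb_mu D (mat2 a b b c) = (THE \<mu>. ?P \<mu>)"
    unfolding nb_mu_def by (simp only: index_mat2)
  ultimately show "- sqrtD - b < nb_mu D (mat2 a b b c) * c"
    and "nb_mu D (mat2 a b b c) * c < - sqrtD - b + \<bar>c\<bar>"
    by simp_all
qed

(* For L_k = (p q; r t) and Q^(k) = [a, 2b, c], the four equations are Q^(k) = L_k^T Itilde L_k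
   rewritten through Itilde(x) = phi(x) psi(x) and det L_k = 1. *)

definition cycle_data :: "int \<Rightarrow> int \<Rightarrow> int \<Rightarrow> int \<Rightarrow> int \<Rightarrow> int \<Rightarrow> int \<Rightarrow> bool" where
  "cycle_data p q r t a b c \<longleftrightarrow>
     a = phi p r * psi p r \<and> c = phi q t * psi q t \<and>
     phi p r * psi q t = b - sqrtD \<and> psi p r * phi q t = b + sqrtD \<and>
     reduced a b \<and> \<bar>psi p r\<bar> \<le> 1"

lemma cycle_data_det:
  fixes p q r t a b c :: int
  assumes "cycle_data p q r t a b c"
  shows "a * c = b ^ 2 - D"
proof -
  have a: "a = phi p r * psi p r" and c: "c = phi q t * psi q t"
    and e1: "phi p r * psi q t = b - sqrtD" and e2: "psi p r * phi q t = b + sqrtD"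
    using assms by (auto simp: cycle_data_def)
  have "real_of_int (a * c) = (phi p r * psi q t) * (psi p r * phi q t)"
    unfolding of_int_mult a c by (simp only: mult_ac)
  also have "\<dots> = real_of_int (b ^ 2 - D)"
    unfolding e1 e2 using D_pos by (simp add: algebra_simps power2_eq_square)
  finally show ?thesis by (simp only: of_int_eq_iff)
qed

lemma cycle_data_abs_psi_less:
  fixes p q r t a b c :: int
  assumes "cycle_data p q r t a b c"
  shows "\<bar>psi q t\<bar> < \<bar>psi p r\<bar>"
proof -
  have a: "a = phi p r * psi p r" and ps: "phi p r * psi q t = b - sqrtD"
    and red: "reduced a b" using assms by (auto simp: cycle_data_def)
  have b: "b < sqrtD" and a_lower: "sqrtD - b < \<bar>a\<bar>" using red by (auto simp: reduced_def)
  have "psi p r \<noteq> 0" using a a_lower b by auto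
  have "a * psi q t = (b - sqrtD) * psi p r" unfolding a ps[symmetric] by (simp add: algebra_simps)
  then have "\<bar>a\<bar> * \<bar>psi q t\<bar> = \<bar>b - sqrtD\<bar> * \<bar>psi p r\<bar>"
    by (simp only: of_int_abs abs_mult[symmetric])
  also have "\<dots> = (sqrtD - b) * \<bar>psi p r\<bar>" using b by simp
  also have "\<dots> < \<bar>a\<bar> * \<bar>psi p r\<bar>"
    using a_lower \<open>psi p r \<noteq> 0\<close> by (intro mult_strict_right_mono) auto
  finally show ?thesis by (rule mult_left_less_imp_less) simp
qed

lemma cycle_data_step:
  fixes p q r t a b c \<mu> :: int
  assumes data: "cycle_data p q r t a b c"
    and mu: "- sqrtD - b < \<mu> * c" "\<mu> * c < - sqrtD - b + \<bar>c\<bar>"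
  shows "cycle_data (- q) (p + q * \<mu>) (- t) (r + t * \<mu>) c (- b - \<mu> * c) (a + 2 * \<mu> * b + \<mu> * \<mu> * c)"
proof -
  have a: "a = phi p r * psi p r" and c: "c = phi q t * psi q t"
    and e1: "phi p r * psi q t = b - sqrtD" and e2: "psi p r * phi q t = b + sqrtD"
    and red: "reduced a b" and psi1: "\<bar>psi p r\<bar> \<le> 1"
    using data by (auto simp: cycle_data_def)
  have "real_of_int (a + 2 * \<mu> * b + \<mu> * \<mu> * c)
      = phi p r * psi p r + \<mu> * (phi p r * psi q t + psi p r * phi q t) + \<mu> * \<mu> * (phi q t * psi q t)"
    unfolding e1 e2 a[symmetric] c[symmetric] by (simp add: algebra_simps)
  then have "real_of_int (a + 2 * \<mu> * b + \<mu> * \<mu> * c)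
      = phi (p + q * \<mu>) (r + t * \<mu>) * psi (p + q * \<mu>) (r + t * \<mu>)"
    unfolding phi_add_mult psi_add_mult by (simp add: algebra_simps)
  moreover have "phi (- q) (- t) * psi (p + q * \<mu>) (r + t * \<mu>)
      = - (psi p r * phi q t) - \<mu> * (phi q t * psi q t)"
    unfolding phi_uminus psi_add_mult by (simp add: algebra_simps)
  then have "phi (- q) (- t) * psi (p + q * \<mu>) (r + t * \<mu>) = (- b - \<mu> * c) - sqrtD"
    unfolding e2 c[symmetric] by simp
  moreover have "psi (- q) (- t) * phi (p + q * \<mu>) (r + t * \<mu>)
      = - (phi p r * psi q t) - \<mu> * (phi q t * psi q t)"
    unfolding psi_uminus phi_add_mult by (simp add: algebra_simps)
  then have "psi (- q) (- t) * phi (p + q * \<mu>) (r + t * \<mu>) = (- b - \<mu> * c) + sqrtD"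
    unfolding e1 c[symmetric] by simp
  moreover have "reduced c (- b - \<mu> * c)"
    using reduced_right_neighbor[OF red cycle_data_det[OF data] mu] .
  moreover have "\<bar>psi (- q) (- t)\<bar> \<le> 1"
    using cycle_data_abs_psi_less[OF data] psi1 by (simp add: psi_uminus)
  moreover have "real_of_int c = phi (- q) (- t) * psi (- q) (- t)"
    using c by (simp add: phi_uminus psi_uminus)
  ultimately show ?thesis unfolding cycle_data_def by blast
qed

lemma cycle_data_Lpos_Qcyc:
  "\<exists>p q r t a b c. Lpos D k = mat2 p q r t \<and> Qcyc D k = mat2 a b b c \<and> cycle_data p q r t a b c"
proof (induction k)
  case 0
  let ?l = "isqrt D"
  have "cycle_data 1 0 0 1 1 ?l (?l ^ 2 - D)"
    unfolding cycle_data_def reduced_def phi_def psi_def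
    using isqrt_pos isqrt_less_sqrtD sqrtD_less_isqrt_plus_1 D_pos
    by (simp add: algebra_simps power2_eq_square sqrtD_mult_self)
  moreover have "Lpos D 0 = mat2 1 0 0 1" by (simp add: one_mat2)
  moreover have "Qcyc D 0 = mat2 1 ?l ?l (?l ^ 2 - D)" by (simp add: Qcyc_def Itilde_def)
  ultimately show ?case by blast
next
  case (Suc k)
  then obtain p q r t a b c where L: "Lpos D k = mat2 p q r t" and Q: "Qcyc D k = mat2 a b b c"
    and data: "cycle_data p q r t a b c" by blast
  define \<mu> where "\<mu> = nb_mu D (mat2 a b b c)"
  have "c \<noteq> 0" using cycle_data_det[OF data] D_nonsquare by auto
  note mu = nb_mu_bounds[OF this, where a = a and b = b, folded \<mu>_def]
  have S: "Scyc D (Suc k) = mat2 0 1 (-1) \<mu>" by (simp add: Scyc_def Q nb_S_def \<mu>_def)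
  have "Lpos D (Suc k) = mat2 (- q) (p + q * \<mu>) (- t) (r + t * \<mu>)"
    by (simp add: L S mat2_mult)
  moreover have "Qcyc D (Suc k) = right_neighbor D (Qcyc D k)" by (simp add: Qcyc_def)
  then have "Qcyc D (Suc k) = transpose_mat (mat2 0 1 (-1) \<mu>) * mat2 a b b c * mat2 0 1 (-1) \<mu>"
    by (simp add: Q right_neighbor_def nb_S_def \<mu>_def)
  then have "Qcyc D (Suc k) = mat2 c (- b - \<mu> * c) (- b - \<mu> * c) (a + 2 * \<mu> * b + \<mu> * \<mu> * c)"
    by (simp add: transpose_mat2 mat2_mult algebra_simps)
  ultimately show ?case using cycle_data_step[OF data mu] by blast
qed

lemma abs_coords_le_of_embedding_bounds:
  fixes x1 x2 :: int
  assumes phi: "\<bar>phi x1 x2\<bar> \<le> P" and psi: "\<bar>psi x1 x2\<bar> \<le> 1"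
  shows "\<bar>x1\<bar> \<le> 1 + P / (2 * sqrtD)" and "\<bar>x2\<bar> \<le> 1 + P / (2 * sqrtD)"
proof -
  let ?l = "real_of_int (isqrt D)" and ?\<phi> = "phi x1 x2" and ?\<psi> = "psi x1 x2"
  have s: "0 < 2 * sqrtD" using D_pos by simp
  have l: "1 \<le> ?l" "?l < sqrtD" "sqrtD - ?l < 1"
    using isqrt_pos isqrt_less_sqrtD sqrtD_less_isqrt_plus_1 by auto
  have x1_eq: "2 * sqrtD * x1 = (?l + sqrtD) * ?\<psi> - (?l - sqrtD) * ?\<phi>"
    and x2_eq: "2 * sqrtD * x2 = ?\<phi> - ?\<psi>"
    by (simp_all add: phi_def psi_def algebra_simps)
  have "2 * sqrtD * \<bar>x1\<bar> = \<bar>(?l + sqrtD) * ?\<psi> - (?l - sqrtD) * ?\<phi>\<bar>"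
    using x1_eq s by (metis abs_mult abs_of_pos of_int_abs)
  also have "\<dots> \<le> (?l + sqrtD) * \<bar>?\<psi>\<bar> + (sqrtD - ?l) * \<bar>?\<phi>\<bar>"
  proof (rule order_trans[OF abs_triangle_ineq4])
    have "\<bar>?l + sqrtD\<bar> = ?l + sqrtD" "\<bar>?l - sqrtD\<bar> = sqrtD - ?l" using l by auto
    then show "\<bar>(?l + sqrtD) * ?\<psi>\<bar> + \<bar>(?l - sqrtD) * ?\<phi>\<bar>
        \<le> (?l + sqrtD) * \<bar>?\<psi>\<bar> + (sqrtD - ?l) * \<bar>?\<phi>\<bar>"
      by (simp add: abs_mult)
  qed
  also have "\<dots> \<le> 2 * sqrtD + P"
  proof -
    have "(?l + sqrtD) * \<bar>?\<psi>\<bar> \<le> ?l + sqrtD" using psi l by (intro mult_left_le) auto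
    moreover have "(sqrtD - ?l) * \<bar>?\<phi>\<bar> \<le> \<bar>?\<phi>\<bar>" using l by (intro mult_left_le_one_le) auto
    ultimately show ?thesis using l phi by linarith
  qed
  finally have x1: "2 * sqrtD * \<bar>x1\<bar> \<le> 2 * sqrtD + P" .
  have "2 * sqrtD * \<bar>x2\<bar> = \<bar>?\<phi> - ?\<psi>\<bar>"
    using x2_eq s by (metis abs_mult abs_of_pos of_int_abs)
  also have "\<dots> \<le> 2 * sqrtD + P" using abs_triangle_ineq4[of ?\<phi> ?\<psi>] phi psi l by linarith
  finally have x2: "2 * sqrtD * \<bar>x2\<bar> \<le> 2 * sqrtD + P" .
  from x1 x2 s show "\<bar>x1\<bar> \<le> 1 + P / (2 * sqrtD)" and "\<bar>x2\<bar> \<le> 1 + P / (2 * sqrtD)"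
    by (simp_all add: field_simps)
qed

definition controlled :: "int mat \<Rightarrow> bool" where
  "controlled S \<longleftrightarrow> S \<in> carrier_mat 2 2 \<and>
     sqrtD < \<bar>phi (S $$ (0,1)) (S $$ (1,1))\<bar> \<and> \<bar>psi (S $$ (0,1)) (S $$ (1,1))\<bar> < 1 \<and>
     mnorm S \<le> 1 + \<bar>phi (S $$ (0,1)) (S $$ (1,1))\<bar> / (2 * sqrtD)"

lemma cycle_data_controlled:
  fixes p q r t a b c :: int
  assumes data: "cycle_data p q r t a b c"
  shows "controlled (mat2 p q r t)"
proof -
  have a: "a = phi p r * psi p r" and e2: "psi p r * phi q t = b + sqrtD"
    and red: "reduced a b" and psi_p: "\<bar>psi p r\<bar> \<le> 1"
    using data by (auto simp: cycle_data_def)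
  have b: "0 < b" "b < sqrtD" and a_bounds: "sqrtD - b < \<bar>a\<bar>" "\<bar>a\<bar> < sqrtD + b"
    using red by (auto simp: reduced_def)
  have psi_q: "\<bar>psi q t\<bar> < \<bar>psi p r\<bar>" by (rule cycle_data_abs_psi_less[OF data])
  have "psi p r \<noteq> 0" using a a_bounds b by auto
  have prod: "\<bar>psi p r\<bar> * \<bar>phi q t\<bar> = b + sqrtD" using e2 b by (simp add: abs_mult[symmetric])
  have "\<bar>psi p r\<bar> * \<bar>phi q t\<bar> \<le> \<bar>phi q t\<bar>" using psi_p by (intro mult_left_le_one_le) auto
  then have phi_q: "sqrtD < \<bar>phi q t\<bar>" using prod b by linarith
  have "\<bar>psi p r\<bar> * \<bar>phi p r\<bar> < \<bar>psi p r\<bar> * \<bar>phi q t\<bar>"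
    using a a_bounds prod by (simp add: abs_mult mult.commute)
  then have phi_p: "\<bar>phi p r\<bar> \<le> \<bar>phi q t\<bar>" using \<open>psi p r \<noteq> 0\<close> by simp
  let ?bound = "1 + \<bar>phi q t\<bar> / (2 * sqrtD)"
  have "mnorm (mat2 p q r t) \<le> \<lfloor>?bound\<rfloor>"
    using abs_coords_le_of_embedding_bounds[OF phi_p psi_p]
      abs_coords_le_of_embedding_bounds[of q t, OF order_refl] psi_q psi_p
    by (intro mnorm_mat2_le) (simp_all only: le_floor_iff of_int_abs)
  then have "mnorm (mat2 p q r t) \<le> ?bound" by (simp only: le_floor_iff)
  then show ?thesis unfolding controlled_def index_mat2 using phi_q psi_q psi_p by simp
qed

lemma controlled_Lpos: "controlled (Lpos D k)"
  using cycle_data_Lpos_Qcyc[of k] cycle_data_controlled by auto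

lemma controlled_uminus:
  assumes "controlled S"
  shows "controlled (- S)"
proof -
  have "S \<in> carrier_mat 2 2" using assms by (simp add: controlled_def)
  then have "(- S) $$ (0,1) = - S $$ (0,1)" "(- S) $$ (1,1) = - S $$ (1,1)" by auto
  with assms show ?thesis by (simp add: controlled_def phi_uminus psi_uminus)
qed

lemma controlled_signed_Lcyc:
  "S = Lcyc D (int k) \<or> S = - Lcyc D (int k) \<Longrightarrow> controlled S"
  using controlled_Lpos controlled_uminus by (auto simp: Lcyc_def)

lemma controlled_mnorm_ge_1:
  assumes "controlled S"
  shows "1 \<le> mnorm S"
proof -
  have S: "S \<in> carrier_mat 2 2" and "sqrtD < \<bar>phi (S $$ (0,1)) (S $$ (1,1))\<bar>"
    using assms by (auto simp: controlled_def)
  then have "S $$ (0,1) \<noteq> 0 \<or> S $$ (1,1) \<noteq> 0" using D_pos by (auto simp: phi_def)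
  then obtain i where "i \<in> {0,1}" "S $$ (i,1) \<noteq> 0" by blast
  then have "i < 2" by auto
  from \<open>S $$ (i,1) \<noteq> 0\<close> have "1 \<le> \<bar>S $$ (i,1)\<bar>" by (simp add: int_one_le_iff_zero_less)
  also have "\<dots> \<le> mnorm S" using S \<open>i < 2\<close> by (intro abs_index_le_mnorm) auto
  finally show ?thesis .
qed

lemma B0_kron_index_1_3:
  assumes S1: "S1 \<in> carrier_mat 2 2" and S2: "S2 \<in> carrier_mat 2 2"
  shows "2 * sqrtD * (B0 D * kron S1 S2) $$ (1,3)
    = phi (S1 $$ (0,1)) (S1 $$ (1,1)) * phi (S2 $$ (0,1)) (S2 $$ (1,1))
      - psi (S1 $$ (0,1)) (S1 $$ (1,1)) * psi (S2 $$ (0,1)) (S2 $$ (1,1))"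
proof -
  have K: "kron S1 S2 \<in> carrier_mat 4 4" using kron_carrier[OF S1 S2] by simp
  have "(B0 D * kron S1 S2) $$ (1,3) = S1 $$ (0,1) * S2 $$ (1,1) + S1 $$ (1,1) * S2 $$ (0,1)
      + 2 * isqrt D * (S1 $$ (1,1) * S2 $$ (1,1))"
    using index_B0_mult(2)[OF K] index_kron[OF S1 S2] by simp
  then show ?thesis by (simp add: phi_def psi_def algebra_simps)
qed

lemma mnorm_lower_bound:
  assumes S1: "controlled S1" and S2: "controlled S2"
    and S3: "S3 \<in> carrier_mat 2 2" and B: "B \<in> carrier_mat 2 4"
    and eq: "S3 * B = B0 D * kron S1 S2"
  shows "mnorm S1 * mnorm S2 \<le> 16 * (mnorm S3 * mnorm B)"
proof -
  let ?\<phi>1 = "phi (S1 $$ (0,1)) (S1 $$ (1,1))" and ?\<psi>1 = "psi (S1 $$ (0,1)) (S1 $$ (1,1))"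
  let ?\<phi>2 = "phi (S2 $$ (0,1)) (S2 $$ (1,1))" and ?\<psi>2 = "psi (S2 $$ (0,1)) (S2 $$ (1,1))"
  have c1: "S1 \<in> carrier_mat 2 2" and c2: "S2 \<in> carrier_mat 2 2"
    using S1 S2 by (auto simp: controlled_def)
  have "\<bar>?\<psi>1 * ?\<psi>2\<bar> \<le> 1"
    using S1 S2 unfolding controlled_def abs_mult by (intro mult_le_one) auto
  then have "\<bar>?\<phi>1\<bar> * \<bar>?\<phi>2\<bar> - 1 \<le> \<bar>?\<phi>1 * ?\<phi>2 - ?\<psi>1 * ?\<psi>2\<bar>"
    using abs_triangle_ineq2[of "?\<phi>1 * ?\<phi>2" "?\<psi>1 * ?\<psi>2"] by (simp add: abs_mult)
  also have "\<dots> = 2 * sqrtD * \<bar>(S3 * B) $$ (1,3)\<bar>"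
    unfolding eq B0_kron_index_1_3[OF c1 c2, symmetric] using D_pos by (simp add: abs_mult)
  also have "\<dots> \<le> 2 * sqrtD * (2 * (mnorm S3 * mnorm B))"
  proof -
    have "\<bar>(S3 * B) $$ (1,3)\<bar> \<le> 2 * (mnorm S3 * mnorm B)"
      using abs_index_mult_le[of 1 S3 3 B] S3 B by simp
    then have "real_of_int \<bar>(S3 * B) $$ (1,3)\<bar> \<le> real_of_int (2 * (mnorm S3 * mnorm B))"
      by (simp only: of_int_le_iff)
    then show ?thesis using D_pos by (intro mult_left_mono) simp_all
  qed
  finally have "\<bar>?\<phi>1\<bar> * \<bar>?\<phi>2\<bar> - 1 \<le> 4 * sqrtD * (real_of_int (mnorm S3) * mnorm B)"
    by simp
  then have "real_of_int (mnorm S1) * mnorm S2 \<le> 16 * (real_of_int (mnorm S3) * mnorm B)"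
    using S1 S2 sqrtD_ge mnorm_nonneg[of 0 S1 0] mnorm_nonneg[of 0 S2 0] c1 c2
    unfolding controlled_def by (intro mult_le_of_embedding_bounds) auto
  then have "real_of_int (mnorm S1 * mnorm S2) \<le> real_of_int (16 * (mnorm S3 * mnorm B))"
    by simp
  then show ?thesis by (simp only: of_int_le_iff)
qed

lemma abs_B0_kron_index_le:
  assumes S1: "S1 \<in> carrier_mat 2 2" and S2: "S2 \<in> carrier_mat 2 2" and "r < 2" "j < 4"
  shows "\<bar>(B0 D * kron S1 S2) $$ (r,j)\<bar> \<le> 2 * (isqrt D + 1) * (mnorm S1 * mnorm S2)"
proof -
  define m where "m = mnorm S1 * mnorm S2"
  let ?K = "kron S1 S2" and ?l = "isqrt D"
  have K: "?K \<in> carrier_mat 4 4" using kron_carrier[OF S1 S2] by simp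
  have Kb: "\<bar>?K $$ (i,j)\<bar> \<le> m" if "i < 4" for i
    unfolding m_def using abs_index_kron_le[OF S1 S2] that \<open>j < 4\<close> by simp
  have l: "0 \<le> D - ?l ^ 2" "D - ?l ^ 2 \<le> 2 * ?l" "0 \<le> 2 * ?l"
    using isqrt_sq_bounds isqrt_pos by auto
  have "\<bar>(D - ?l ^ 2) * ?K $$ (3,j)\<bar> \<le> 2 * ?l * m" "\<bar>2 * ?l * ?K $$ (3,j)\<bar> \<le> 2 * ?l * m"
    unfolding abs_mult using l Kb[of 3] by (simp_all add: mult_mono')
  moreover have "2 * (?l + 1) * m = 2 * ?l * m + 2 * m" by (simp add: algebra_simps)
  moreover have "r = 0 \<or> r = 1" using \<open>r < 2\<close> by auto
  ultimately show ?thesis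
    using index_B0_mult[OF K \<open>j < 4\<close>] Kb[of 0] Kb[of 1] Kb[of 2] Kb[of 3]
    unfolding m_def[symmetric] by (auto simp del: mult_2 mult_2_right)
qed

lemma mnorm_upper_bound:
  assumes S1: "S1 \<in> carrier_mat 2 2" and S2: "S2 \<in> carrier_mat 2 2"
    and S3: "S3 \<in> carrier_mat 2 2" and B: "B \<in> carrier_mat 2 4"
    and eq: "S3 * B = B0 D * kron S1 S2"
    and "i < 4" "k < 4" and "minor24 B i k \<noteq> 0"
  shows "mnorm S3 \<le> 4 * (isqrt D + 1) * (mnorm S1 * mnorm S2 * mnorm B)"
proof -
  have "mnorm S3 \<le> 2 * (2 * (isqrt D + 1) * (mnorm S1 * mnorm S2)) * mnorm B"
    using assms(6-8) abs_B0_kron_index_le[OF S1 S2] unfolding eq[symmetric]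
    by (intro mnorm_le_of_nonzero_minor[OF S3 B]) auto
  then show ?thesis by (simp add: algebra_simps)
qed

end

theorem lemma6p3:
  fixes D :: int and Q1 Q2 Q3 S1 S2 S3 B :: "int mat"
    and k1 k2 :: nat and k3 :: int and c1 :: real
  assumes "D > 0" and "\<not> (\<exists>r::int. r ^ 2 = D)"
    and "Q1 \<in> principal_cycle D" "Q2 \<in> principal_cycle D" "Q3 \<in> principal_cycle D"
    and "equiv_via (Itilde D) Q1 S1" "S1 = Lcyc D (int k1) \<or> S1 = - Lcyc D (int k1)"
    and "equiv_via (Itilde D) Q2 S2" "S2 = Lcyc D (int k2) \<or> S2 = - Lcyc D (int k2)"
    and "composes_via Q1 Q2 Q3 B"
    and "lg (real_of_int (mnorm B)) \<le> c1 * lg (real_of_int D)"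
    and "S3 \<in> carrier_mat 2 2" "S3 * B = B0 D * kron S1 S2"
    and "S3 = Lcyc D k3 \<or> S3 = - Lcyc D k3"
  shows "\<bar>lg (real_of_int (mnorm (Lcyc D k3)))
          - lg (real_of_int (mnorm (Lcyc D (int k1))))
          - lg (real_of_int (mnorm (Lcyc D (int k2))))\<bar>
         \<le> (c1 + 4) * lg (real_of_int D)"
proof -
  interpret nonsquare D using assms(1,2) by unfold_locales
  have B: "B \<in> carrier_mat 2 4" and minor: "minor24 B 0 1 \<noteq> 0"
    using assms(10) unfolding composes_via_def by auto
  have S1: "controlled S1" and S2: "controlled S2"
    using assms(7,9) by (simp_all add: controlled_signed_Lcyc)
  then have "S1 \<in> carrier_mat 2 2" "S2 \<in> carrier_mat 2 2" by (simp_all add: controlled_def)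
  note S3 = assms(12) and eq = assms(13)
  have lower: "mnorm S1 * mnorm S2 \<le> 16 * (mnorm S3 * mnorm B)"
    by (rule mnorm_lower_bound[OF S1 S2 S3 B eq])
  have upper: "mnorm S3 \<le> 4 * (isqrt D + 1) * (mnorm S1 * mnorm S2 * mnorm B)"
    by (rule mnorm_upper_bound[OF _ _ S3 B eq _ _ minor]) (use \<open>S1 \<in> _\<close> \<open>S2 \<in> _\<close> in simp_all)
  have "\<bar>lg (mnorm S3) - lg (mnorm S1) - lg (mnorm S2)\<bar> \<le> (c1 + 4) * lg D"
    using S3 B mnorm_nonneg[of 0 S3 0] mnorm_nonneg[of 0 B 0] assms(11)
    by (intro lg_distortion_bound[OF controlled_mnorm_ge_1[OF S1] controlled_mnorm_ge_1[OF S2]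
          _ _ isqrt_pos isqrt_le_D lower upper]) simp_all
  moreover have "mnorm S1 = mnorm (Lcyc D (int k1))" "mnorm S2 = mnorm (Lcyc D (int k2))"
    "mnorm S3 = mnorm (Lcyc D k3)"
    using assms(7,9,14) by auto
  ultimately show ?thesis by simp
qed

end
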